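(* Let $\mathcal{X}$ and $\mathcal{Y}$ be finite sets, let $n\ge 1$ and $k\ge 0$ be integers, and let $P_{\mathbf{y}|\mathbf{x}}$ be a channel from $\mathcal{X}^n$ to $\mathcal{Y}^n$. Let $P_{\mathbf{x}}$ be an arbitrary probability distribution on $\mathcal{X}^n$ and let $\Delta\in\mathbb{N}_0=\{0,1,2,\dots\}$. Then there exists an $(n,k,\epsilon_{\mathsf T},\epsilon_{\mathsf U})$-code for $P_{\mathbf{y}|\mathbf{x}}$ satisfying simultaneously $$\epsilon_{\mathsf T}\le \mathrm{RCU}(k+\Delta,n)\qquad\text{and}\qquad \epsilon_{\mathsf U}\le \mathrm{RCU}(k+\Delta,n)\,2^{-\Delta},$$ where, for an integer $j\ge 0$, $$\mathrm{RCU}(j,n)=\mathbb{E}\Big[\min\Big\{1,\,(2^{j}-1)\,\Pr\big[P_{\mathbf{y}|\mathbf{x}}(\mathbf{y}|\bar{\mathbf{x}})\ge P_{\mathbf{y}|\mathbf{x}}(\mathbf{y}|\mathbf{x})\,\big|\,\mathbf{x},\mathbf{y}\big]\Big\}\Big],$$ with $(\mathbf{x},\mathbf{y},\bar{\mathbf{x}})$ jointly distributed as $P_{\mathbf{x},\mathbf{y},\bar{\mathbf{x}}}(\mathbf{x},\mathbf{y},\bar{\mathbf{x}})=P_{\mathbf{x}}(\mathbf{x})\,P_{\mathbf{y}|\mathbf{x}}(\mathbf{y}|\mathbf{x})\,P_{\mathbf{x}}(\bar{\mathbf{x}})$ (the outer expectation is over $(\mathbf{x},\mathbf{y})$).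
   Context: A channel from $\mathcal{X}^n$ to $\mathcal{Y}^n$ is a conditional probability mass function $P_{\mathbf{y}|\mathbf{x}}(\mathbf{y}|\mathbf{x})$, $\mathbf{x}\in\mathcal{X}^n$, $\mathbf{y}\in\mathcal{Y}^n$. (The paper notes the same statement applies to continuous alphabets with conditional densities in place of pmfs.) Definition ($(n,k,\epsilon_{\mathsf T},\epsilon_{\mathsf U})$-code). An $(n,k,\epsilon_{\mathsf T},\epsilon_{\mathsf U})$-code for the channel $P_{\mathbf{y}|\mathbf{x}}$ consists of: (i) a discrete random variable $u$ with distribution $P_u$ on a set $\mathcal{U}$ with $|\mathcal{U}|\le 2$, known to both transmitter and receiver (common randomness); (ii) an encoder $\phi:\mathcal{U}\times\{1,\dots,2^k\}\to\mathcal{X}^n$; (iii) an erasure decoder $g:\mathcal{U}\times\mathcal{Y}^n\to\{0,1,\dots,2^k\}$, where output $0$ denotes an erasure. For each $u$ and $\hat w\in\{0,1,\dots,2^k\}$ let $\mathcal{D}_{u,\hat w}=\{\mathbf{y}: g(u,\mathbf{y})=\hat w\}$ (these partition $\mathcal{Y}^n$). The message $w$ is uniform on $\{1,\dots,2^k\}$ and independent of $u$, and given $u$ and $w=m$ the output $\mathbf{y}$ has law $P_{\mathbf{y}|\mathbf{x}}(\cdot\,|\,\phi(u,m))$. It is required that the total error probability and undetected error probability satisfy $$\frac{1}{2^k}\sum_{m=1}^{2^k}\sum_{\substack{m'=0\\ m'\ne m}}^{2^k}\Pr[\mathbf{y}\in\mathcal{D}_{u,m'}\mid w=m]\le\epsilon_{\mathsf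 T},\qquad \frac{1}{2^k}\sum_{m=1}^{2^k}\sum_{\substack{m'=1\\ m'\ne m}}^{2^k}\Pr[\mathbf{y}\in\mathcal{D}_{u,m'}\mid w=m]\le\epsilon_{\mathsf U},$$ where probabilities are over the pair $(u,\mathbf{y})$. *)

theory Defs
  imports Main "HOL-Library.FuncSet" Complex_Main
begin

definition words :: "nat \<Rightarrow> 'a list set" where
  "words n = {xs. length xs = n}"

definition pmf_on :: "'a set \<Rightarrow> ('a \<Rightarrow> real) \<Rightarrow> bool" where
  "pmf_on A P \<longleftrightarrow> (\<forall>a\<in>A. 0 \<le> P a) \<and> sum P A = 1"

text \<open>A channel from \<X>^n to \<Y>^n: W x y = P(y|x).\<close>
definition channel :: "nat \<Rightarrow> ('x list \<Rightarrow> 'y list \<Rightarrow> real) \<Rightarrow> bool" where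
  "channel n W \<longleftrightarrow> (\<forall>x\<in>words n. pmf_on (words n) (W x))"

definition RCU :: "nat \<Rightarrow> ('x list \<Rightarrow> 'y list \<Rightarrow> real) \<Rightarrow> ('x list \<Rightarrow> real) \<Rightarrow> nat \<Rightarrow> real" where
  "RCU n W Px j =
     (\<Sum>x\<in>words n. \<Sum>y\<in>words n. Px x * W x y *
        min 1 ((2 ^ j - 1) * (\<Sum>xb\<in>{xb\<in>words n. W xb y \<ge> W x y}. Px xb)))"

text \<open>The common randomness u takes values in a set of size \<le> 2,
  modelled as bool with a pmf pu (a one-element U corresponds to pu putting all mass
  on one point). Messages are 1..2^k, decoder output 0 means erasure.
  Pr[y \<in> D_{u,m'} | w = m] = \<Sum>_u pu u * \<Sum>_{y, g u y = m'} W (enc u m) y.\<close>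
definition is_code :: "nat \<Rightarrow> nat \<Rightarrow> ('x list \<Rightarrow> 'y list \<Rightarrow> real) \<Rightarrow> real \<Rightarrow> real \<Rightarrow> bool" where
  "is_code n k W eT eU \<longleftrightarrow>
     (\<exists>(pu :: bool \<Rightarrow> real) (enc :: bool \<Rightarrow> nat \<Rightarrow> 'x list) (dec :: bool \<Rightarrow> 'y list \<Rightarrow> nat).
        pmf_on UNIV pu \<and>
        (\<forall>u m. m \<in> {1..2^k} \<longrightarrow> enc u m \<in> words n) \<and>
        (\<forall>u y. y \<in> words n \<longrightarrow> dec u y \<in> {0..2^k}) \<and>
        (1 / 2 ^ k) * (\<Sum>m\<in>{1..2^k}. \<Sum>m'\<in>{0..2^k} - {m}.
            \<Sum>u\<in>UNIV. pu u * (\<Sum>y\<in>{y\<in>words n. dec u y = m'}. W (enc u m) y)) \<le> eT \<and>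
        (1 / 2 ^ k) * (\<Sum>m\<in>{1..2^k}. \<Sum>m'\<in>{1..2^k} - {m}.
            \<Sum>u\<in>UNIV. pu u * (\<Sum>y\<in>{y\<in>words n. dec u y = m'}. W (enc u m) y)) \<le> eU)"

end

theory Submission
  imports Defs "HOL-Combinatorics.Permutations"
begin

text \<open>
  Draw a codebook of \<open>M = 2^(k+\<Delta>)\<close> codewords i.i.d. from \<open>P\<^sub>x\<close>, send message
  \<open>m \<le> 2^k\<close> with codeword \<open>m\<close>, and decode to the message whose codeword is strictly the most
  likely among all \<open>M\<close> codewords, erasing otherwise. Applying the union bound only where it is
  below 1 bounds the probability that the sent codeword does not win by \<open>RCU(k+\<Delta>, n)\<close>.
  By symmetry each of the other \<open>M - 1\<close> codewords wins with the same probability, and at most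
  one of them wins; only \<open>2^k - 1\<close> of them carry messages, whence the factor \<open>2^-\<Delta>\<close> for
  undetected errors. Finally, two averages over the random codebook are attained simultaneously
  by mixing at most two codebooks, which is what the binary common randomness provides.
\<close>

lemma sum_weighted_pos:
  fixes P h :: "'i \<Rightarrow> real"
  assumes "finite I" and P_nonneg: "\<And>i. i \<in> I \<Longrightarrow> 0 \<le> P i" and "sum P I = 1"
    and h_pos: "\<And>i. i \<in> I \<Longrightarrow> 0 < P i \<Longrightarrow> 0 < h i"
  shows "0 < (\<Sum>i\<in>I. P i * h i)"
proof -
  obtain i where i: "i \<in> I" "0 < P i"
    using \<open>sum P I = 1\<close> sum_nonpos[of I P] by (metis not_le zero_less_one)
  show ?thesis
  proof (rule sum_pos2[OF \<open>finite I\<close> i(1)])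
    show "0 < P i * h i" using i h_pos by simp
    show "0 \<le> P j * h j" if "j \<in> I" for j
      using P_nonneg[OF that] h_pos[OF that] by (cases "P j = 0") auto
  qed
qed

lemma segment_crossing:
  fixes xi xj yi yj :: real
  assumes "xj \<le> 0" "0 < xi" "xi * yj - xj * yi \<le> 0"
  shows "\<exists>l. 0 \<le> l \<and> l \<le> 1 \<and> l * xi + (1 - l) * xj \<le> 0 \<and> l * yi + (1 - l) * yj \<le> 0"
proof (intro exI conjI)
  define l where "l = - xj / (xi - xj)"
  have pos: "0 < xi - xj" using assms by simp
  have l_scaled: "l * (xi - xj) = - xj" using pos by (simp add: l_def)
  show "0 \<le> l" "l \<le> 1" using assms pos by (auto simp: l_def divide_simps)
  show "l * xi + (1 - l) * xj \<le> 0" using l_scaled by (simp add: algebra_simps)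
  have "(l * yi + (1 - l) * yj) * (xi - xj) = l * (xi - xj) * (yi - yj) + yj * (xi - xj)"
    by (simp add: algebra_simps)
  also have "\<dots> = xi * yj - xj * yi"
    unfolding l_scaled by (simp add: algebra_simps)
  finally have "(l * yi + (1 - l) * yj) * (xi - xj) \<le> 0" using assms(3) by simp
  then show "l * yi + (1 - l) * yj \<le> 0" using pos by (simp add: mult_le_0_iff)
qed

lemma crossing_weights_vanish:
  fixes P d e :: "'i \<Rightarrow> real" and L R :: "'i set"
  defines "DL \<equiv> \<Sum>i\<in>L. P i * d i" and "DR \<equiv> \<Sum>j\<in>R. P j * - d j"
    and "EL \<equiv> \<Sum>i\<in>L. P i * e i" and "ER \<equiv> \<Sum>j\<in>R. P j * e j"
  assumes "finite L" "finite R" "\<And>i. i \<in> L \<union> R \<Longrightarrow> 0 \<le> P i"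
    and "DL \<le> DR" "EL \<le> - ER" "0 \<le> DR" "0 \<le> ER"
    and crossing: "\<And>i j. i \<in> L \<Longrightarrow> j \<in> R \<Longrightarrow> 0 < d i * e j - d j * e i"
  shows "\<forall>i\<in>L. \<forall>j\<in>R. P i = 0 \<or> P j = 0"
proof -
  define t where "t = (\<lambda>(i, j). P i * P j * (d i * e j - d j * e i))"
  have t_nonneg: "0 \<le> t ij" if ij: "ij \<in> L \<times> R" for ij
  proof -
    obtain i j where "ij = (i, j)" "i \<in> L" "j \<in> R" using ij by auto
    then show ?thesis
      using assms(7) crossing[of i j] by (auto simp: t_def intro!: mult_nonneg_nonneg)
  qed
  have "sum t (L \<times> R) = (\<Sum>i\<in>L. \<Sum>j\<in>R. (P i * e i) * (P j * - d j) + (P i * d i) * (P j * e j))"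
    by (simp add: t_def sum.cartesian_product algebra_simps)
  also have "\<dots> = EL * DR + DL * ER"
    by (simp only: EL_def DR_def DL_def ER_def sum_product sum.distrib)
  also have "\<dots> \<le> 0"
    using assms(8-11) mult_right_mono[of EL "- ER" DR] mult_right_mono[of DL DR ER]
    by (simp add: algebra_simps)
  finally have "sum t (L \<times> R) = 0"
    using t_nonneg by (meson order_antisym sum_nonneg)
  then have "t (i, j) = 0" if "i \<in> L" "j \<in> R" for i j
    using sum_nonneg_eq_0_iff[of "L \<times> R" t] assms(5,6) t_nonneg that by blast
  then show ?thesis
    using crossing by (fastforce simp: t_def)
qed

text \<open>
  If no segment between a point with \<open>d > 0\<close> and one with \<open>d \<le> 0\<close> meets the quadrant
  \<open>d, e \<le> 0\<close>, all crossing terms are positive although their weighted sum is not.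
\<close>

lemma two_point_mixture_nonpos:
  fixes P d e :: "'i \<Rightarrow> real"
  assumes fin: "finite I" and P_nonneg: "\<And>i. i \<in> I \<Longrightarrow> 0 \<le> P i" and P_sum: "sum P I = 1"
    and d_avg: "(\<Sum>i\<in>I. P i * d i) \<le> 0" and e_avg: "(\<Sum>i\<in>I. P i * e i) \<le> 0"
  shows "\<exists>i\<in>I. \<exists>j\<in>I. \<exists>l. 0 \<le> l \<and> l \<le> 1 \<and>
           l * d i + (1 - l) * d j \<le> 0 \<and> l * e i + (1 - l) * e j \<le> 0"
proof (rule ccontr)
  assume no_pair: "\<not> ?thesis"
  define L where "L = {i\<in>I. 0 < d i}"
  define R where "R = I - L"
  have split: "(\<Sum>i\<in>I. h i) = (\<Sum>i\<in>L. h i) + (\<Sum>j\<in>R. h j)" for h :: "'i \<Rightarrow> real"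
    using sum.subset_diff[of L I h] fin by (auto simp: L_def R_def)
  have R_d: "d j \<le> 0" if "j \<in> R" for j
    using that by (auto simp: L_def R_def)
  have R_e: "0 < e j" if "j \<in> R" for j
    using no_pair that R_d[OF that] by (force simp: R_def intro: exI[of _ 1])
  have "\<forall>i\<in>L. \<forall>j\<in>R. P i = 0 \<or> P j = 0"
  proof (rule crossing_weights_vanish)
    show "finite L" "finite R" "\<And>i. i \<in> L \<union> R \<Longrightarrow> 0 \<le> P i"
      using fin P_nonneg by (auto simp: L_def R_def)
    show "(\<Sum>i\<in>L. P i * d i) \<le> (\<Sum>j\<in>R. P j * - d j)" "(\<Sum>i\<in>L. P i * e i) \<le> - (\<Sum>j\<in>R. P j * e j)"
      using d_avg e_avg split[of "\<lambda>i. P i * d i"] split[of "\<lambda>i. P i * e i"] by (simp_all add: sum_negf)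
    show "0 \<le> (\<Sum>j\<in>R. P j * - d j)" "0 \<le> (\<Sum>j\<in>R. P j * e j)"
      using P_nonneg R_d R_e by (intro sum_nonneg mult_nonneg_nonneg; force simp: R_def)+
    show "0 < d i * e j - d j * e i" if "i \<in> L" "j \<in> R" for i j
      using segment_crossing[of "d j" "d i" "e j" "e i"] no_pair that R_d by (force simp: L_def R_def)
  qed
  show False
  proof (cases "\<exists>j\<in>R. 0 < P j")
    case True
    then have "0 < e i" if "i \<in> I" "0 < P i" for i
      using \<open>\<forall>i\<in>L. \<forall>j\<in>R. P i = 0 \<or> P j = 0\<close> that R_e by (fastforce simp: R_def)
    then show False
      using sum_weighted_pos[of I P e] fin P_nonneg P_sum e_avg by force
  next
    case False
    then have "0 < d i" if "i \<in> I" "0 < P i" for i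
      using that by (auto simp: L_def R_def)
    then show False
      using sum_weighted_pos[of I P d] fin P_nonneg P_sum d_avg by force
  qed
qed

lemma two_point_mixture_le:
  fixes P f g :: "'i \<Rightarrow> real"
  assumes "finite I" "\<And>i. i \<in> I \<Longrightarrow> 0 \<le> P i" "sum P I = 1"
    and "(\<Sum>i\<in>I. P i * f i) \<le> a" "(\<Sum>i\<in>I. P i * g i) \<le> b"
  shows "\<exists>i\<in>I. \<exists>j\<in>I. \<exists>l. 0 \<le> l \<and> l \<le> 1 \<and>
           l * f i + (1 - l) * f j \<le> a \<and> l * g i + (1 - l) * g j \<le> b"
proof -
  have shift: "(\<Sum>i\<in>I. P i * (h i - c)) = (\<Sum>i\<in>I. P i * h i) - c" for h c
    using assms(3) by (simp add: right_diff_distrib sum_subtractf sum_distrib_right[symmetric])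
  have "(\<Sum>i\<in>I. P i * (f i - a)) \<le> 0" "(\<Sum>i\<in>I. P i * (g i - b)) \<le> 0"
    using assms(4,5) shift[of f a] shift[of g b] by linarith+
  from two_point_mixture_nonpos[OF assms(1-3) this] show ?thesis
    by (simp add: algebra_simps)
qed

definition iid_prob :: "'i set \<Rightarrow> ('x \<Rightarrow> real) \<Rightarrow> ('i \<Rightarrow> 'x) \<Rightarrow> real" where
  "iid_prob A P c = (\<Prod>i\<in>A. P (c i))"

lemma iid_prob_nonneg:
  assumes "\<And>x. x \<in> S \<Longrightarrow> 0 \<le> P x" and "c \<in> A \<rightarrow>\<^sub>E S"
  shows "0 \<le> iid_prob A P c"
  using assms unfolding iid_prob_def by (auto intro!: prod_nonneg)

lemma sum_iid_prob_prod:
  assumes "finite A" "finite S" "B \<subseteq> A" "sum P S = 1"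
  shows "(\<Sum>c\<in>A \<rightarrow>\<^sub>E S. iid_prob A P c * (\<Prod>i\<in>B. F i (c i))) = (\<Prod>i\<in>B. \<Sum>x\<in>S. P x * F i x)"
proof -
  define G where "G i x = P x * (if i \<in> B then F i x else 1)" for i x
  have restrict: "(\<Prod>i\<in>A. if i \<in> B then h i else 1) = prod h B" for h :: "'a \<Rightarrow> real"
    using assms(1,3) prod.inter_filter[of A h "\<lambda>i. i \<in> B"] by (simp add: Int_absorb1 flip: Int_def)
  have "(\<Sum>c\<in>A \<rightarrow>\<^sub>E S. iid_prob A P c * (\<Prod>i\<in>B. F i (c i))) = (\<Sum>c\<in>A \<rightarrow>\<^sub>E S. \<Prod>i\<in>A. G i (c i))"
    by (simp add: G_def iid_prob_def prod.distrib restrict)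
  also have "\<dots> = (\<Prod>i\<in>A. \<Sum>x\<in>S. G i x)"
    using assms(1,2) by (rule prod_sum_PiE[symmetric])
  also have "\<dots> = (\<Prod>i\<in>A. if i \<in> B then \<Sum>x\<in>S. P x * F i x else 1)"
    using assms(4) by (intro prod.cong) (auto simp: G_def)
  also have "\<dots> = (\<Prod>i\<in>B. \<Sum>x\<in>S. P x * F i x)"
    by (rule restrict)
  finally show ?thesis .
qed

lemma sum_iid_prob_marginal:
  assumes "finite A" "finite S" "m \<in> A" "sum P S = 1"
  shows "(\<Sum>c\<in>A \<rightarrow>\<^sub>E S. iid_prob A P c * F (c m)) = (\<Sum>x\<in>S. P x * F x)"
  using sum_iid_prob_prod[of A S "{m}" P "\<lambda>_. F"] assms by simp

lemma sum_iid_prob: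
  assumes "finite A" "finite S" "m \<in> A" "sum P S = 1"
  shows "(\<Sum>c\<in>A \<rightarrow>\<^sub>E S. iid_prob A P c) = 1"
  using sum_iid_prob_marginal[OF assms, of "\<lambda>_. 1"] assms(4) by simp

lemma sum_iid_prob_pair_marginal:
  fixes A :: "'i set" and P :: "'x \<Rightarrow> real" and h :: "'x \<Rightarrow> 'x \<Rightarrow> real"
  assumes "finite A" "finite S" "m \<in> A" "i \<in> A" "m \<noteq> i" "sum P S = 1"
  shows "(\<Sum>c\<in>A \<rightarrow>\<^sub>E S. iid_prob A P c * h (c m) (c i)) = (\<Sum>x\<in>S. P x * (\<Sum>x'\<in>S. P x' * h x x'))"
proof -
  define F :: "'x \<Rightarrow> 'x \<Rightarrow> 'i \<Rightarrow> 'x \<Rightarrow> real" where "F x x' j z = of_bool (z = (if j = m then x else x'))" for x x' j z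
  have pick: "h (c m) (c i) = (\<Sum>x\<in>S. \<Sum>x'\<in>S. h x x' * (\<Prod>j\<in>{m, i}. F x x' j (c j)))"
    if "c \<in> A \<rightarrow>\<^sub>E S" for c
  proof -
    have "c m \<in> S" "c i \<in> S" using that assms(3,4) by auto
    then show ?thesis
      using assms(2,5) by (simp add: F_def of_bool_def if_distrib[of "\<lambda>t. _ * t"] sum.If_cases cong: if_cong)
  qed
  have "(\<Sum>c\<in>A \<rightarrow>\<^sub>E S. iid_prob A P c * h (c m) (c i))
      = (\<Sum>x\<in>S. \<Sum>x'\<in>S. h x x' * (\<Sum>c\<in>A \<rightarrow>\<^sub>E S. iid_prob A P c * (\<Prod>j\<in>{m, i}. F x x' j (c j))))"
    by (simp add: pick sum_distrib_left sum_distrib_right sum.swap[of _ "A \<rightarrow>\<^sub>E S"] algebra_simps cong: sum.cong)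
  also have "\<dots> = (\<Sum>x\<in>S. \<Sum>x'\<in>S. h x x' * (P x * P x'))"
  proof (intro sum.cong refl)
    fix x x' assume "x \<in> S" "x' \<in> S"
    then have "(\<Sum>z\<in>S. P z * F x x' j z) = P (if j = m then x else x')" for j
      using assms(2) by (simp add: F_def of_bool_def if_distrib[of "\<lambda>t. _ * t"] cong: if_cong)
    moreover have "(\<Sum>c\<in>A \<rightarrow>\<^sub>E S. iid_prob A P c * (\<Prod>j\<in>{m, i}. F x x' j (c j)))
        = (\<Prod>j\<in>{m, i}. \<Sum>z\<in>S. P z * F x x' j z)"
      by (rule sum_iid_prob_prod) (use assms in auto)
    ultimately show "h x x' * (\<Sum>c\<in>A \<rightarrow>\<^sub>E S. iid_prob A P c * (\<Prod>j\<in>{m, i}. F x x' j (c j)))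
        = h x x' * (P x * P x')"
      using assms(5) by simp
  qed
  finally show ?thesis by (simp add: sum_distrib_left algebra_simps)
qed

lemma real_card_Diff_singleton:
  "finite A \<Longrightarrow> m \<in> A \<Longrightarrow> real (card (A - {m})) = real (card A) - 1"
  by (metis One_nat_def card_Diff_singleton card_gt_0_iff empty_iff of_nat_1 of_nat_diff Suc_leI)

lemma sum_iid_prob_others:
  assumes "finite A" "finite S" "m \<in> A" "sum P S = 1"
  shows "(\<Sum>c\<in>A \<rightarrow>\<^sub>E S. iid_prob A P c * (\<Sum>i\<in>A - {m}. h (c m) (c i)))
    = (real (card A) - 1) * (\<Sum>x\<in>S. P x * (\<Sum>x'\<in>S. P x' * h x x'))"
proof -
  have "(\<Sum>c\<in>A \<rightarrow>\<^sub>E S. iid_prob A P c * (\<Sum>i\<in>A - {m}. h (c m) (c i)))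
      = (\<Sum>i\<in>A - {m}. \<Sum>c\<in>A \<rightarrow>\<^sub>E S. iid_prob A P c * h (c m) (c i))"
    by (simp add: sum_distrib_left sum.swap[of _ "A \<rightarrow>\<^sub>E S"])
  also have "\<dots> = (\<Sum>i\<in>A - {m}. \<Sum>x\<in>S. P x * (\<Sum>x'\<in>S. P x' * h x x'))"
    using assms by (intro sum.cong refl sum_iid_prob_pair_marginal) auto
  also have "\<dots> = real (card (A - {m})) * (\<Sum>x\<in>S. P x * (\<Sum>x'\<in>S. P x' * h x x'))"
    by (simp only: sum_constant)
  also have "real (card (A - {m})) = real (card A) - 1"
    using assms(1,3) by (rule real_card_Diff_singleton)
  finally show ?thesis .
qed

lemma sum_PiE_comp_permutes:
  assumes "\<sigma> permutes A"
  shows "(\<Sum>c\<in>A \<rightarrow>\<^sub>E S. g (c \<circ> \<sigma>)) = (\<Sum>c\<in>A \<rightarrow>\<^sub>E S. g c)"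
proof -
  have comp_PiE: "c \<circ> \<tau> \<in> A \<rightarrow>\<^sub>E S" if "\<tau> permutes A" "c \<in> A \<rightarrow>\<^sub>E S" for \<tau> c
    using that by (auto simp: PiE_iff extensional_def permutes_in_image permutes_not_in)
  have inv_perm: "inv \<sigma> permutes A"
    using assms by (rule permutes_inv)
  show ?thesis
  proof (rule sum.reindex_bij_witness[of _ "\<lambda>c. c \<circ> inv \<sigma>" "\<lambda>c. c \<circ> \<sigma>"])
    show "c \<circ> inv \<sigma> \<in> A \<rightarrow>\<^sub>E S" "c \<circ> \<sigma> \<in> A \<rightarrow>\<^sub>E S" if "c \<in> A \<rightarrow>\<^sub>E S" for c
      using comp_PiE[OF inv_perm that] comp_PiE[OF assms that] .
  qed (use assms in \<open>auto simp: o_assoc[symmetric] permutes_inv_o\<close>)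
qed

lemma iid_prob_comp_permutes:
  "\<sigma> permutes A \<Longrightarrow> iid_prob A P (c \<circ> \<sigma>) = iid_prob A P c"
  unfolding iid_prob_def using prod.permute[of \<sigma> A "\<lambda>i. P (c i)"] by (simp add: comp_def)

definition strictly_most_likely :: "'i set \<Rightarrow> ('x \<Rightarrow> 'y \<Rightarrow> real) \<Rightarrow> ('i \<Rightarrow> 'x) \<Rightarrow> 'y \<Rightarrow> 'i \<Rightarrow> bool" where
  "strictly_most_likely A W c y j \<longleftrightarrow> (\<forall>i\<in>A. i \<noteq> j \<longrightarrow> W (c i) y < W (c j) y)"

lemma strictly_most_likely_unique:
  "j \<in> A \<Longrightarrow> j' \<in> A \<Longrightarrow> strictly_most_likely A W c y j \<Longrightarrow> strictly_most_likely A W c y j' \<Longrightarrow> j = j'"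
  unfolding strictly_most_likely_def by (metis less_asym)

lemma strictly_most_likely_comp_permutes:
  assumes "\<sigma> permutes A"
  shows "strictly_most_likely A W (c \<circ> \<sigma>) y j \<longleftrightarrow> strictly_most_likely A W c y (\<sigma> j)"
proof -
  have "(\<forall>i\<in>A. i \<noteq> j \<longrightarrow> W (c (\<sigma> i)) y < W (c (\<sigma> j)) y)
      \<longleftrightarrow> (\<forall>i\<in>\<sigma> ` A. i \<noteq> \<sigma> j \<longrightarrow> W (c i) y < W (c (\<sigma> j)) y)"
    using permutes_inj[OF assms] by (auto simp: inj_eq)
  then show ?thesis
    by (simp add: strictly_most_likely_def permutes_image[OF assms])
qed

lemma not_strictly_most_likely_le:
  assumes "finite A"
  shows "of_bool (\<not> strictly_most_likely A W c y m)
    \<le> (\<Sum>i\<in>A - {m}. of_bool (W (c m) y \<le> W (c i) y) :: real)"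
proof (cases "strictly_most_likely A W c y m")
  case False
  then obtain i where i: "i \<in> A - {m}" "W (c m) y \<le> W (c i) y"
    by (auto simp: strictly_most_likely_def not_less)
  then have "1 \<le> (\<Sum>i\<in>A - {m}. of_bool (W (c m) y \<le> W (c i) y) :: real)"
    using assms member_le_sum[of i "A - {m}" "\<lambda>i. of_bool (W (c m) y \<le> W (c i) y) :: real"] by simp
  then show ?thesis using False by simp
qed (simp add: sum_nonneg)

lemma sum_strictly_most_likely_others_le:
  assumes "finite A" "m \<in> A"
  shows "(\<Sum>j\<in>A - {m}. of_bool (strictly_most_likely A W c y j) :: real)
    \<le> of_bool (\<not> strictly_most_likely A W c y m)"
proof -
  define J where "J = (A - {m}) \<inter> {j. strictly_most_likely A W c y j}"
  have sum_J: "(\<Sum>j\<in>A - {m}. of_bool (strictly_most_likely A W c y j) :: real) = card J"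
    using assms(1) by (simp add: J_def)
  have "card J \<le> 1"
    unfolding One_nat_def using assms(1)
    by (subst card_le_Suc0_iff_eq) (auto simp: J_def intro: strictly_most_likely_unique)
  moreover have "J = {}" if "strictly_most_likely A W c y m"
    unfolding J_def using that assms(2) strictly_most_likely_unique[of _ A m W c y] by blast
  ultimately show ?thesis unfolding sum_J by (cases "strictly_most_likely A W c y m") auto
qed

text \<open>
  Only codewords \<open>1..K\<close> carry messages, but all codewords in \<open>A\<close> compete: a transmitted
  codeword beaten by an unused one causes an erasure rather than an undetected error.
\<close>

definition ml_decoder :: "nat set \<Rightarrow> nat \<Rightarrow> ('x \<Rightarrow> 'y \<Rightarrow> real) \<Rightarrow> (nat \<Rightarrow> 'x) \<Rightarrow> 'y \<Rightarrow> nat" where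
  "ml_decoder A K W c y =
     (if \<exists>j\<in>{1..K}. strictly_most_likely A W c y j
      then SOME j. j \<in> {1..K} \<and> strictly_most_likely A W c y j else 0)"

lemma ml_decoder_range: "ml_decoder A K W c y \<in> {0..K}"
proof (cases "\<exists>j\<in>{1..K}. strictly_most_likely A W c y j")
  case True
  then have "(SOME j. j \<in> {1..K} \<and> strictly_most_likely A W c y j) \<in> {1..K}"
    by (metis (mono_tags, lifting) someI_ex)
  then show ?thesis using True by (auto simp: ml_decoder_def)
qed (auto simp: ml_decoder_def)

lemma ml_decoder_eq_iff:
  assumes "j \<in> {1..K}" "{1..K} \<subseteq> A"
  shows "ml_decoder A K W c y = j \<longleftrightarrow> strictly_most_likely A W c y j"
proof (cases "\<exists>j\<in>{1..K}. strictly_most_likely A W c y j")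
  case True
  define s where "s = (SOME j. j \<in> {1..K} \<and> strictly_most_likely A W c y j)"
  have s: "s \<in> {1..K}" "strictly_most_likely A W c y s"
    using True unfolding s_def by (metis (mono_tags, lifting) someI_ex)+
  have decode: "ml_decoder A K W c y = s"
    using True by (simp add: ml_decoder_def s_def)
  have "s \<in> A" "j \<in> A"
    using s(1) assms by auto
  then show ?thesis
    unfolding decode using s(2) strictly_most_likely_unique[of s A j W c y] by auto
qed (use assms in \<open>auto simp: ml_decoder_def\<close>)

definition total_error :: "nat \<Rightarrow> 'y set \<Rightarrow> ('x \<Rightarrow> 'y \<Rightarrow> real) \<Rightarrow> (nat \<Rightarrow> 'x) \<Rightarrow> ('y \<Rightarrow> nat) \<Rightarrow> real" where
  "total_error K Y W enc dec =
     1 / K * (\<Sum>m\<in>{1..K}. \<Sum>m'\<in>{0..K} - {m}. \<Sum>y\<in>{y\<in>Y. dec y = m'}. W (enc m) y)"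

definition undetected_error :: "nat \<Rightarrow> 'y set \<Rightarrow> ('x \<Rightarrow> 'y \<Rightarrow> real) \<Rightarrow> (nat \<Rightarrow> 'x) \<Rightarrow> ('y \<Rightarrow> nat) \<Rightarrow> real" where
  "undetected_error K Y W enc dec =
     1 / K * (\<Sum>m\<in>{1..K}. \<Sum>m'\<in>{1..K} - {m}. \<Sum>y\<in>{y\<in>Y. dec y = m'}. W (enc m) y)"

lemma total_error_ml_decoder:
  assumes "finite Y" "{1..K} \<subseteq> A"
  shows "total_error K Y W c (ml_decoder A K W c)
    = 1 / K * (\<Sum>m\<in>{1..K}. \<Sum>y\<in>Y. W (c m) y * of_bool (\<not> strictly_most_likely A W c y m))"
proof -
  have "(\<Sum>m'\<in>{0..K} - {m}. \<Sum>y\<in>{y\<in>Y. ml_decoder A K W c y = m'}. W (c m) y)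
      = (\<Sum>y\<in>Y. W (c m) y * of_bool (\<not> strictly_most_likely A W c y m))"
    if m: "m \<in> {1..K}" for m
  proof -
    let ?E = "{y\<in>Y. ml_decoder A K W c y \<noteq> m}"
    have "(\<Sum>m'\<in>{0..K} - {m}. \<Sum>y\<in>{y\<in>Y. ml_decoder A K W c y = m'}. W (c m) y)
        = (\<Sum>m'\<in>{0..K} - {m}. \<Sum>y\<in>{y\<in>?E. ml_decoder A K W c y = m'}. W (c m) y)"
      by (intro sum.cong refl) auto
    also have "\<dots> = (\<Sum>y\<in>?E. W (c m) y)"
      by (rule sum.group) (use assms(1) ml_decoder_range in auto)
    also have "\<dots> = (\<Sum>y\<in>Y. W (c m) y * of_bool (\<not> strictly_most_likely A W c y m))"
      using assms m by (simp add: ml_decoder_eq_iff Int_def conj_commute)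
    finally show ?thesis .
  qed
  then show ?thesis by (simp add: total_error_def)
qed

lemma undetected_error_ml_decoder:
  assumes "finite Y" "{1..K} \<subseteq> A"
  shows "undetected_error K Y W c (ml_decoder A K W c)
    = 1 / K * (\<Sum>m\<in>{1..K}. \<Sum>m'\<in>{1..K} - {m}. \<Sum>y\<in>Y. W (c m) y * of_bool (strictly_most_likely A W c y m'))"
proof -
  have "(\<Sum>y\<in>{y\<in>Y. ml_decoder A K W c y = m'}. W (c m) y)
      = (\<Sum>y\<in>Y. W (c m) y * of_bool (strictly_most_likely A W c y m'))"
    if "m' \<in> {1..K}" for m m'
    using assms that by (simp add: ml_decoder_eq_iff Int_def conj_commute)
  then show ?thesis by (simp add: undetected_error_def)
qed

lemma is_code_mixture:
  fixes enc :: "bool \<Rightarrow> nat \<Rightarrow> 'x list" and dec :: "bool \<Rightarrow> 'y list \<Rightarrow> nat"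
  assumes "0 \<le> l" "l \<le> 1"
    and "\<And>u m. m \<in> {1..2^k} \<Longrightarrow> enc u m \<in> words n"
    and "\<And>u y. y \<in> words n \<Longrightarrow> dec u y \<in> {0..2^k}"
  shows "is_code n k W
    (l * total_error (2^k) (words n) W (enc True) (dec True)
       + (1 - l) * total_error (2^k) (words n) W (enc False) (dec False))
    (l * undetected_error (2^k) (words n) W (enc True) (dec True)
       + (1 - l) * undetected_error (2^k) (words n) W (enc False) (dec False))"
  unfolding is_code_def
proof (intro exI conjI)
  define pu where "pu u = (if u then l else 1 - l)" for u :: bool
  have mix: "(\<Sum>m\<in>I. \<Sum>m'\<in>J m. \<Sum>u\<in>UNIV. pu u * X u m m')
      = l * (\<Sum>m\<in>I. \<Sum>m'\<in>J m. X True m m') + (1 - l) * (\<Sum>m\<in>I. \<Sum>m'\<in>J m. X False m m')"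
    for I :: "nat set" and J :: "nat \<Rightarrow> nat set" and X :: "bool \<Rightarrow> nat \<Rightarrow> nat \<Rightarrow> real"
    by (simp add: pu_def UNIV_bool sum.distrib sum_distrib_left)
  have scale: "c * (l * a + (1 - l) * b) = l * (c * a) + (1 - l) * (c * b)" for a b c :: real
    by (simp add: algebra_simps)
  show "pmf_on UNIV pu"
    using assms(1,2) by (auto simp: pmf_on_def pu_def UNIV_bool)
  show "1 / 2 ^ k * (\<Sum>m\<in>{1..2^k}. \<Sum>m'\<in>{0..2^k} - {m}.
      \<Sum>u\<in>UNIV. pu u * (\<Sum>y\<in>{y\<in>words n. dec u y = m'}. W (enc u m) y))
    \<le> l * total_error (2^k) (words n) W (enc True) (dec True)
       + (1 - l) * total_error (2^k) (words n) W (enc False) (dec False)"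
    unfolding mix scale total_error_def by simp
  show "1 / 2 ^ k * (\<Sum>m\<in>{1..2^k}. \<Sum>m'\<in>{1..2^k} - {m}.
      \<Sum>u\<in>UNIV. pu u * (\<Sum>y\<in>{y\<in>words n. dec u y = m'}. W (enc u m) y))
    \<le> l * undetected_error (2^k) (words n) W (enc True) (dec True)
       + (1 - l) * undetected_error (2^k) (words n) W (enc False) (dec False)"
    unfolding mix scale undetected_error_def by simp
qed (use assms in auto)

lemma is_code_of_average:
  fixes enc :: "'c \<Rightarrow> nat \<Rightarrow> 'x list" and dec :: "'c \<Rightarrow> 'y list \<Rightarrow> nat"
  assumes Q: "finite C" "\<And>c. c \<in> C \<Longrightarrow> 0 \<le> Q c" "sum Q C = 1"
    and enc: "\<And>c m. c \<in> C \<Longrightarrow> m \<in> {1..2^k} \<Longrightarrow> enc c m \<in> words n"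
    and dec: "\<And>c y. c \<in> C \<Longrightarrow> y \<in> words n \<Longrightarrow> dec c y \<in> {0..2^k}"
    and averages: "(\<Sum>c\<in>C. Q c * total_error (2^k) (words n) W (enc c) (dec c)) \<le> a"
      "(\<Sum>c\<in>C. Q c * undetected_error (2^k) (words n) W (enc c) (dec c)) \<le> b"
  shows "\<exists>eT eU. is_code n k W eT eU \<and> eT \<le> a \<and> eU \<le> b"
proof -
  obtain c1 c2 l where c: "c1 \<in> C" "c2 \<in> C" and l: "0 \<le> l" "l \<le> 1"
    and "l * total_error (2^k) (words n) W (enc c1) (dec c1)
          + (1 - l) * total_error (2^k) (words n) W (enc c2) (dec c2) \<le> a"
    and "l * undetected_error (2^k) (words n) W (enc c1) (dec c1)
          + (1 - l) * undetected_error (2^k) (words n) W (enc c2) (dec c2) \<le> b"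
    using two_point_mixture_le[OF Q averages] by blast
  moreover have "is_code n k W
      (l * total_error (2^k) (words n) W (enc c1) (dec c1)
         + (1 - l) * total_error (2^k) (words n) W (enc c2) (dec c2))
      (l * undetected_error (2^k) (words n) W (enc c1) (dec c1)
         + (1 - l) * undetected_error (2^k) (words n) W (enc c2) (dec c2))"
    using is_code_mixture[OF l, of k "\<lambda>u. enc (if u then c1 else c2)" n "\<lambda>u. dec (if u then c1 else c2)" W]
      enc dec c by simp
  ultimately show ?thesis by blast
qed

definition pairwise_error_prob :: "'x set \<Rightarrow> ('x \<Rightarrow> 'y \<Rightarrow> real) \<Rightarrow> ('x \<Rightarrow> real) \<Rightarrow> 'x \<Rightarrow> 'y \<Rightarrow> real" where
  "pairwise_error_prob S W P x y = (\<Sum>x'\<in>{x'\<in>S. W x y \<le> W x' y}. P x')"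

definition rcu_bound :: "'x set \<Rightarrow> 'y set \<Rightarrow> ('x \<Rightarrow> 'y \<Rightarrow> real) \<Rightarrow> ('x \<Rightarrow> real) \<Rightarrow> real \<Rightarrow> real" where
  "rcu_bound S T W P N = (\<Sum>x\<in>S. \<Sum>y\<in>T. P x * W x y * min 1 (N * pairwise_error_prob S W P x y))"

lemma RCU_eq_rcu_bound: "RCU n W Px j = rcu_bound (words n) (words n) W Px (2 ^ j - 1)"
  by (simp add: RCU_def rcu_bound_def pairwise_error_prob_def)

lemma rcu_bound_nonneg:
  assumes "\<And>x. x \<in> S \<Longrightarrow> 0 \<le> P x" "\<And>x y. x \<in> S \<Longrightarrow> y \<in> T \<Longrightarrow> 0 \<le> W x y" "0 \<le> N"
  shows "0 \<le> rcu_bound S T W P N"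
  unfolding rcu_bound_def pairwise_error_prob_def using assms
  by (auto intro!: sum_nonneg mult_nonneg_nonneg)

text \<open>
  The choice between the union bound and the trivial bound depends only on the sent codeword and
  the output, so the expectation over the other codewords still factorises.
\<close>

lemma expected_truncated_union_bound:
  fixes W :: "'x \<Rightarrow> 'y \<Rightarrow> real"
  assumes "finite A" "finite S" "m \<in> A" "sum P S = 1"
  defines "N \<equiv> real (card A) - 1"
  shows "(\<Sum>c\<in>A \<rightarrow>\<^sub>E S. iid_prob A P c *
      (if N * pairwise_error_prob S W P (c m) y \<le> 1
       then \<Sum>i\<in>A - {m}. W (c m) y * of_bool (W (c m) y \<le> W (c i) y) else W (c m) y))
    = (\<Sum>x\<in>S. P x * W x y * min 1 (N * pairwise_error_prob S W P x y))"
proof -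
  define s where "s x \<longleftrightarrow> N * pairwise_error_prob S W P x y \<le> 1" for x
  define G where "G x x' = of_bool (s x) * W x y * of_bool (W x y \<le> W x' y)" for x x'
  have G_average: "(\<Sum>x'\<in>S. P x' * G x x') = of_bool (s x) * W x y * pairwise_error_prob S W P x y" for x
  proof -
    have "(\<Sum>x'\<in>S. P x' * G x x')
        = of_bool (s x) * W x y * (\<Sum>x'\<in>S. P x' * of_bool (W x y \<le> W x' y))"
      by (simp add: G_def sum_distrib_left mult.commute mult.left_commute)
    also have "(\<Sum>x'\<in>S. P x' * of_bool (W x y \<le> W x' y)) = pairwise_error_prob S W P x y"
      unfolding pairwise_error_prob_def sum.inter_filter[OF assms(2)] by (rule sum.cong) auto
    finally show ?thesis .
  qed
  have "(\<Sum>c\<in>A \<rightarrow>\<^sub>E S. iid_prob A P c *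
      (if s (c m) then \<Sum>i\<in>A - {m}. W (c m) y * of_bool (W (c m) y \<le> W (c i) y) else W (c m) y))
    = (\<Sum>c\<in>A \<rightarrow>\<^sub>E S. iid_prob A P c * ((\<Sum>i\<in>A - {m}. G (c m) (c i)) + of_bool (\<not> s (c m)) * W (c m) y))"
    by (intro sum.cong refl) (simp add: G_def)
  also have "\<dots> = N * (\<Sum>x\<in>S. P x * (\<Sum>x'\<in>S. P x' * G x x')) + (\<Sum>x\<in>S. P x * (of_bool (\<not> s x) * W x y))"
    using sum_iid_prob_others[OF assms(1-4), of G]
      sum_iid_prob_marginal[OF assms(1-4), of "\<lambda>x. of_bool (\<not> s x) * W x y"]
    by (simp add: N_def distrib_left sum.distrib)
  also have "\<dots> = (\<Sum>x\<in>S. P x * W x y * min 1 (N * pairwise_error_prob S W P x y))"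
    unfolding G_average sum_distrib_left sum.distrib[symmetric]
    by (intro sum.cong refl) (auto simp: s_def min_def algebra_simps)
  finally show ?thesis by (simp add: s_def)
qed

lemma expected_not_strictly_most_likely_le:
  fixes W :: "'x \<Rightarrow> 'y \<Rightarrow> real"
  assumes "finite A" "finite S" "finite T" "m \<in> A" and P: "pmf_on S P"
    and W_nonneg: "\<And>x y. x \<in> S \<Longrightarrow> y \<in> T \<Longrightarrow> 0 \<le> W x y"
  shows "(\<Sum>c\<in>A \<rightarrow>\<^sub>E S. iid_prob A P c *
            (\<Sum>y\<in>T. W (c m) y * of_bool (\<not> strictly_most_likely A W c y m)))
    \<le> rcu_bound S T W P (real (card A) - 1)"
proof -
  define N where "N = real (card A) - 1"
  define U where "U c y = (if N * pairwise_error_prob S W P (c m) y \<le> 1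
      then \<Sum>i\<in>A - {m}. W (c m) y * of_bool (W (c m) y \<le> W (c i) y) else W (c m) y)" for c y
  have P_nonneg: "\<And>x. x \<in> S \<Longrightarrow> 0 \<le> P x" and P_sum: "sum P S = 1"
    using P by (auto simp: pmf_on_def)
  have pointwise: "W (c m) y * of_bool (\<not> strictly_most_likely A W c y m) \<le> U c y"
    if "c \<in> A \<rightarrow>\<^sub>E S" "y \<in> T" for c y
  proof -
    have "0 \<le> W (c m) y" using W_nonneg that assms(4) by auto
    then show ?thesis
      using mult_left_mono[OF not_strictly_most_likely_le[OF assms(1), of W c y m]]
      by (simp add: U_def sum_distrib_left)
  qed
  have "(\<Sum>c\<in>A \<rightarrow>\<^sub>E S. iid_prob A P c *
            (\<Sum>y\<in>T. W (c m) y * of_bool (\<not> strictly_most_likely A W c y m)))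
      \<le> (\<Sum>c\<in>A \<rightarrow>\<^sub>E S. iid_prob A P c * (\<Sum>y\<in>T. U c y))"
    using pointwise P_nonneg by (intro sum_mono mult_left_mono iid_prob_nonneg) auto
  also have "\<dots> = (\<Sum>y\<in>T. \<Sum>c\<in>A \<rightarrow>\<^sub>E S. iid_prob A P c * U c y)"
    by (simp add: sum_distrib_left sum.swap[of _ "A \<rightarrow>\<^sub>E S"])
  also have "\<dots> = (\<Sum>y\<in>T. \<Sum>x\<in>S. P x * W x y * min 1 (N * pairwise_error_prob S W P x y))"
    unfolding U_def N_def using assms(1-4) P_sum by (simp add: expected_truncated_union_bound)
  also have "\<dots> = rcu_bound S T W P N"
    by (simp add: rcu_bound_def sum.swap[of _ T])
  finally show ?thesis unfolding N_def .
qed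

text \<open>
  Swapping codewords \<open>j\<close> and \<open>j'\<close> preserves the i.i.d. law and fixes codeword \<open>m\<close>, so every
  \<open>j \<noteq> m\<close> is strictly most likely with the same probability; and at most one codeword is.
\<close>

lemma expected_other_strictly_most_likely_le:
  fixes W :: "'x \<Rightarrow> 'y \<Rightarrow> real"
  assumes "finite A" "m \<in> A" "j \<in> A" "j \<noteq> m"
    and P_nonneg: "\<And>x. x \<in> S \<Longrightarrow> 0 \<le> P x"
    and W_nonneg: "\<And>x y. x \<in> S \<Longrightarrow> y \<in> T \<Longrightarrow> 0 \<le> W x y"
  shows "(real (card A) - 1) *
      (\<Sum>c\<in>A \<rightarrow>\<^sub>E S. iid_prob A P c * (\<Sum>y\<in>T. W (c m) y * of_bool (strictly_most_likely A W c y j)))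
    \<le> (\<Sum>c\<in>A \<rightarrow>\<^sub>E S. iid_prob A P c * (\<Sum>y\<in>T. W (c m) y * of_bool (\<not> strictly_most_likely A W c y m)))"
proof -
  define V where "V j' = (\<Sum>c\<in>A \<rightarrow>\<^sub>E S. iid_prob A P c *
      (\<Sum>y\<in>T. W (c m) y * of_bool (strictly_most_likely A W c y j')))" for j'
  have symmetric: "V j' = V j" if "j' \<in> A - {m}" for j'
  proof -
    let ?\<sigma> = "transpose j' j"
    have \<sigma>: "?\<sigma> permutes A" using that assms(3) by (simp add: permutes_swap_id)
    have "V j' = (\<Sum>c\<in>A \<rightarrow>\<^sub>E S. iid_prob A P (c \<circ> ?\<sigma>) *
        (\<Sum>y\<in>T. W ((c \<circ> ?\<sigma>) m) y * of_bool (strictly_most_likely A W (c \<circ> ?\<sigma>) y j')))"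
      unfolding V_def by (rule sum_PiE_comp_permutes[OF \<sigma>, symmetric])
    moreover have "?\<sigma> m = m" using that assms(4) by auto
    ultimately show ?thesis
      by (simp add: V_def iid_prob_comp_permutes[OF \<sigma>] strictly_most_likely_comp_permutes[OF \<sigma>])
  qed
  have "(real (card A) - 1) * V j = (\<Sum>j'\<in>A - {m}. V j)"
    by (simp only: sum_constant real_card_Diff_singleton[OF assms(1,2)])
  also have "\<dots> = (\<Sum>j'\<in>A - {m}. V j')"
    by (rule sum.cong[OF refl]) (rule symmetric[symmetric])
  also have "\<dots> = (\<Sum>c\<in>A \<rightarrow>\<^sub>E S. iid_prob A P c *
      (\<Sum>y\<in>T. W (c m) y * (\<Sum>j'\<in>A - {m}. of_bool (strictly_most_likely A W c y j'))))"
    unfolding V_def sum_distrib_left by (subst sum.swap, rule sum.cong[OF refl], subst sum.swap, simp)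
  also have "\<dots> \<le> (\<Sum>c\<in>A \<rightarrow>\<^sub>E S. iid_prob A P c *
      (\<Sum>y\<in>T. W (c m) y * of_bool (\<not> strictly_most_likely A W c y m)))"
    using assms(2)
    by (intro sum_mono mult_left_mono iid_prob_nonneg sum_strictly_most_likely_others_le[OF assms(1,2)]
        W_nonneg P_nonneg) (auto simp: PiE_iff)
  finally show ?thesis unfolding V_def .
qed

lemma expected_total_error_ml_decoder_le:
  fixes W :: "'x \<Rightarrow> 'y \<Rightarrow> real"
  assumes "finite A" "finite S" "finite T" "{1..K} \<subseteq> A" "0 < K" "pmf_on S P"
    and W_nonneg: "\<And>x y. x \<in> S \<Longrightarrow> y \<in> T \<Longrightarrow> 0 \<le> W x y"
  shows "(\<Sum>c\<in>A \<rightarrow>\<^sub>E S. iid_prob A P c * total_error K T W c (ml_decoder A K W c))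
    \<le> rcu_bound S T W P (real (card A) - 1)"
proof -
  let ?R = "rcu_bound S T W P (real (card A) - 1)"
  have "(\<Sum>c\<in>A \<rightarrow>\<^sub>E S. iid_prob A P c * total_error K T W c (ml_decoder A K W c))
      = 1 / K * (\<Sum>m\<in>{1..K}. \<Sum>c\<in>A \<rightarrow>\<^sub>E S. iid_prob A P c *
          (\<Sum>y\<in>T. W (c m) y * of_bool (\<not> strictly_most_likely A W c y m)))"
    using assms(3,4) by (simp add: total_error_ml_decoder sum_distrib_left sum.swap[of _ "A \<rightarrow>\<^sub>E S"] mult.left_commute)
  also have "\<dots> \<le> 1 / K * (\<Sum>m\<in>{1..K}. ?R)"
    using assms by (intro mult_left_mono sum_mono expected_not_strictly_most_likely_le) auto
  also have "\<dots> = ?R"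
    using assms(5) by simp
  finally show ?thesis .
qed

lemma expected_other_strictly_most_likely_le_rcu_bound:
  fixes W :: "'x \<Rightarrow> 'y \<Rightarrow> real"
  assumes "finite A" "finite S" "finite T" "m \<in> A" "j \<in> A" "j \<noteq> m" and P: "pmf_on S P"
    and W_nonneg: "\<And>x y. x \<in> S \<Longrightarrow> y \<in> T \<Longrightarrow> 0 \<le> W x y"
  shows "(real (card A) - 1) *
      (\<Sum>c\<in>A \<rightarrow>\<^sub>E S. iid_prob A P c * (\<Sum>y\<in>T. W (c m) y * of_bool (strictly_most_likely A W c y j)))
    \<le> rcu_bound S T W P (real (card A) - 1)"
proof -
  have P_nonneg: "\<And>x. x \<in> S \<Longrightarrow> 0 \<le> P x"
    using P by (simp add: pmf_on_def)
  have "(real (card A) - 1) *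
      (\<Sum>c\<in>A \<rightarrow>\<^sub>E S. iid_prob A P c * (\<Sum>y\<in>T. W (c m) y * of_bool (strictly_most_likely A W c y j)))
    \<le> (\<Sum>c\<in>A \<rightarrow>\<^sub>E S. iid_prob A P c * (\<Sum>y\<in>T. W (c m) y * of_bool (\<not> strictly_most_likely A W c y m)))"
    by (rule expected_other_strictly_most_likely_le) (use assms(1,4-6) P_nonneg W_nonneg in auto)
  also have "\<dots> \<le> rcu_bound S T W P (real (card A) - 1)"
    by (rule expected_not_strictly_most_likely_le) (use assms in auto)
  finally show ?thesis .
qed

lemma diff_one_divide_le: "1 \<le> K \<Longrightarrow> K \<le> M \<Longrightarrow> (real K - 1) / (real M - 1) \<le> real K / real M"
  by (cases "M = 1") (simp_all add: field_simps)

lemma expected_undetected_error_ml_decoder_le: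
  fixes W :: "'x \<Rightarrow> 'y \<Rightarrow> real"
  assumes "finite A" "finite S" "finite T" "{1..K} \<subseteq> A" "0 < K" and P: "pmf_on S P"
    and W_nonneg: "\<And>x y. x \<in> S \<Longrightarrow> y \<in> T \<Longrightarrow> 0 \<le> W x y"
  shows "(\<Sum>c\<in>A \<rightarrow>\<^sub>E S. iid_prob A P c * undetected_error K T W c (ml_decoder A K W c))
    \<le> K / card A * rcu_bound S T W P (real (card A) - 1)"
proof -
  let ?R = "rcu_bound S T W P (real (card A) - 1)"
  define V where "V m j = (\<Sum>c\<in>A \<rightarrow>\<^sub>E S. iid_prob A P c *
      (\<Sum>y\<in>T. W (c m) y * of_bool (strictly_most_likely A W c y j)))" for m j
  have K_le: "K \<le> card A"
    using card_mono[OF assms(1,4)] by simp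
  have R_nonneg: "0 \<le> ?R"
    using K_le assms(5) P W_nonneg by (intro rcu_bound_nonneg) (auto simp: pmf_on_def)
  have row_le: "(\<Sum>m'\<in>{1..K} - {m}. V m m') \<le> K / card A * ?R" if m: "m \<in> {1..K}" for m
  proof -
    have "(\<Sum>m'\<in>{1..K} - {m}. V m m') \<le> (\<Sum>m'\<in>{1..K} - {m}. ?R / (real (card A) - 1))"
    proof (rule sum_mono)
      fix m' assume "m' \<in> {1..K} - {m}"
      then have m_m': "m \<in> A" "m' \<in> A" "m' \<noteq> m" using m assms(4) by auto
      then have "{m, m'} \<subseteq> A" "card {m, m'} = 2" by auto
      then have "0 < real (card A) - 1" using card_mono[OF assms(1), of "{m, m'}"] by simp
      then show "V m m' \<le> ?R / (real (card A) - 1)"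
        using expected_other_strictly_most_likely_le_rcu_bound[OF assms(1-3) m_m' P W_nonneg]
        by (simp add: V_def pos_le_divide_eq mult.commute)
    qed
    also have "\<dots> = (real K - 1) / (real (card A) - 1) * ?R"
      using m by simp
    also have "\<dots> \<le> K / card A * ?R"
      using K_le assms(5) by (intro mult_right_mono R_nonneg diff_one_divide_le) auto
    finally show ?thesis .
  qed
  have "(\<Sum>c\<in>A \<rightarrow>\<^sub>E S. iid_prob A P c * undetected_error K T W c (ml_decoder A K W c))
      = 1 / K * (\<Sum>m\<in>{1..K}. \<Sum>m'\<in>{1..K} - {m}. V m m')"
    using assms(3,4) by (simp add: undetected_error_ml_decoder V_def sum_distrib_left
        sum.swap[of _ "A \<rightarrow>\<^sub>E S"] mult.left_commute)
  also have "\<dots> \<le> 1 / K * (\<Sum>m\<in>{1..K}. K / card A * ?R)"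
    using row_le by (intro mult_left_mono sum_mono) auto
  also have "\<dots> = K / card A * ?R"
    using assms(5) by simp
  finally show ?thesis .
qed

lemma finite_words: "finite (words n :: ('a::finite) list set)"
proof -
  have "words n = {xs :: 'a list. set xs \<subseteq> UNIV \<and> length xs = n}" by (auto simp: words_def)
  then show ?thesis using finite_lists_length_eq[OF finite_UNIV, of n] by simp
qed

lemma exists_code_le_rcu_bound:
  fixes W :: "('x::finite) list \<Rightarrow> ('y::finite) list \<Rightarrow> real" and A :: "nat set"
  assumes "finite A" "{1..2 ^ k} \<subseteq> A" "channel n W" and Px: "pmf_on (words n) Px"
  defines "R \<equiv> rcu_bound (words n) (words n) W Px (real (card A) - 1)"
  shows "\<exists>eT eU. is_code n k W eT eU \<and> eT \<le> R \<and> eU \<le> 2 ^ k / card A * R"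
proof -
  let ?K = "2 ^ k :: nat"
  have fin: "finite A" "finite (words n :: 'x list set)" "finite (words n :: 'y list set)"
    using assms(1) by (simp_all add: finite_words)
  have W_nonneg: "\<And>x y. x \<in> words n \<Longrightarrow> y \<in> words n \<Longrightarrow> 0 \<le> W x y"
    using assms(3) by (auto simp: channel_def pmf_on_def)
  show ?thesis
  proof (rule is_code_of_average[where C = "A \<rightarrow>\<^sub>E words n" and Q = "iid_prob A Px"
        and enc = "\<lambda>c. c" and dec = "ml_decoder A ?K W"])
    show "sum (iid_prob A Px) (A \<rightarrow>\<^sub>E words n) = 1"
      using fin Px assms(2) by (intro sum_iid_prob[of _ _ 1]) (auto simp: pmf_on_def)
    show "(\<Sum>c\<in>A \<rightarrow>\<^sub>E words n. iid_prob A Px c * total_error ?K (words n) W c (ml_decoder A ?K W c)) \<le> R"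
      unfolding R_def by (rule expected_total_error_ml_decoder_le) (use fin assms(2) Px W_nonneg in auto)
    show "(\<Sum>c\<in>A \<rightarrow>\<^sub>E words n. iid_prob A Px c * undetected_error ?K (words n) W c (ml_decoder A ?K W c))
        \<le> 2 ^ k / card A * R"
      unfolding R_def using expected_undetected_error_ml_decoder_le[OF fin assms(2) _ Px W_nonneg] by simp
    show "0 \<le> iid_prob A Px c" if "c \<in> A \<rightarrow>\<^sub>E words n" for c
      using Px that by (intro iid_prob_nonneg) (auto simp: pmf_on_def)
    show "c m \<in> words n" if "c \<in> A \<rightarrow>\<^sub>E words n" "m \<in> {1..?K}" for c :: "nat \<Rightarrow> 'x list" and m
      using that assms(2) by auto
    show "ml_decoder A ?K W c y \<in> {0..?K}" for c y
      by (rule ml_decoder_range)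
  qed (use fin in \<open>simp add: finite_PiE\<close>)
qed

theorem theorem1:
  fixes W :: "('x::finite) list \<Rightarrow> ('y::finite) list \<Rightarrow> real"
    and Px :: "'x list \<Rightarrow> real"
    and n k \<Delta> :: nat
  assumes "n \<ge> 1"
    and "channel n W"
    and "pmf_on (words n) Px"
  shows "\<exists>eT eU. is_code n k W eT eU \<and>
           eT \<le> RCU n W Px (k + \<Delta>) \<and>
           eU \<le> RCU n W Px (k + \<Delta>) * 2 powr (- real \<Delta>)"
proof -
  define A where "A = {1..2 ^ (k + \<Delta>) :: nat}"
  have "{1..2 ^ k} \<subseteq> A"
    by (auto simp: A_def power_increasing)
  moreover have "rcu_bound (words n) (words n) W Px (real (card A) - 1) = RCU n W Px (k + \<Delta>)"
    by (simp add: RCU_eq_rcu_bound A_def)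
  moreover have "2 ^ k / real (card A) = 2 powr (- real \<Delta>)"
    by (simp add: A_def power_add powr_minus powr_realpow divide_simps)
  ultimately show ?thesis
    using exists_code_le_rcu_bound[of A k n W Px] assms(2,3) by (simp add: A_def mult.commute)
qed

end
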